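(* Let $\mathbf{M}_\sigma\in\mathbb{R}^{n\times n}$ be symmetric positive semidefinite, $\mathbf{M}_\nu\in\mathbb{R}^{n\times n}$ symmetric positive definite, $\mathbf{C}\in\mathbb{R}^{n\times n}$ (discrete curl), $\mathbf{P}\in\mathbb{R}^{n\times k}$ (reduced projection of a tree-cotree gauge in the non-conducting region) and $\mathbf{X}_\mathrm{s}\in\mathbb{R}^{n\times n_\mathrm{s}}$ (discrete winding function). Set $\bar{\mathbf{M}}_\sigma=\mathbf{P}^\top\mathbf{M}_\sigma\mathbf{P}$, $\mathbf{K}_\nu=\mathbf{P}^\top\mathbf{C}^\top\mathbf{M}_\nu\mathbf{C}\mathbf{P}$, $\bar{\mathbf{X}}_\mathrm{s}=\mathbf{P}^\top\mathbf{X}_\mathrm{s}$, and assume that $\lambda\bar{\mathbf{M}}_\sigma+\mathbf{K}_\nu$ is positive definite for every $\lambda>0$, that $\bar{\mathbf{X}}_\mathrm{s}$ has full column rank, and that $\mathrm{im}\,\bar{\mathbf{X}}_\mathrm{s}\perp\mathrm{im}\,\bar{\mathbf{M}}_\sigma$. Then the gauged, spatially discretised A* system with circuit coupling \begin{align*} \bar{\mathbf{M}}_\sigma\tfrac{\mathrm{d}}{\mathrm{d}t}\mathbf{a}_\mathrm{red}+\mathbf{K}_\nu\mathbf{a}_\mathrm{red}-\bar{\mathbf{X}}_\mathrm{s}\mathbf{i}_\mathrm{s}&=0,\\ \tfrac{\mathrm{d}}{\mathrm{d}t}\bar{\mathbf{X}}_\mathrm{s}^\top\mathbf{a}_\mathrm{red}-\mathbf{v}_\mathrm{s}&=0,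 \end{align*} with $\mathbf{x}_\lambda=\mathbf{a}_\mathrm{red}$, $\mathbf{i}_\lambda=\mathbf{i}_\mathrm{s}$, $\mathbf{v}_\lambda=\mathbf{v}_\mathrm{s}$, is an inductance-like element.
   Context: Positive definite means $\mathbf{x}^\top\mathbf{M}\mathbf{x}>0$ for $\mathbf{x}\ne0$. Inductance-like element: a device described by a DAE $\mathbf{F}(\frac{\mathrm{d}}{\mathrm{d}t}\mathbf{x}_\lambda,\frac{\mathrm{d}}{\mathrm{d}t}\mathbf{i}_\lambda,\mathbf{x}_\lambda,\mathbf{i}_\lambda,\mathbf{v}_\lambda,t)=0$ with $\mathbf{x}_\lambda:\mathcal{I}\to\mathbb{R}^{n_\mathrm{dof}}$, $\mathbf{i}_\lambda,\mathbf{v}_\lambda:\mathcal{I}\to\mathbb{R}^{n_\lambda}$, such that at most one differentiation $\frac{\mathrm{d}}{\mathrm{d}t}\mathbf{F}=0$ is needed to obtain from $\mathbf{F}=0$ and $\frac{\mathrm{d}}{\mathrm{d}t}\mathbf{F}=0$ (by algebraic manipulations) a system $\frac{\mathrm{d}}{\mathrm{d}t}\mathbf{x}_\lambda=\mathbf{f}_\mathbf{x}(\mathbf{x}_\lambda,\mathbf{i}_\lambda,\mathbf{v}_\lambda,t)$, $\frac{\mathrm{d}}{\mathrm{d}t}\phi(\mathbf{i}_\lambda,\mathbf{x}_\lambda,t)=\mathbf{f}_\phi(\mathbf{x}_\lambda,\mathbf{i}_\lambda,\mathbf{v}_\lambda,t)$, where $\partial\phi/\partial\mathbf{i}_\lambda$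 is regular and $\frac{\partial}{\partial\mathbf{v}_\lambda}\Big((\frac{\partial\phi}{\partial\mathbf{i}_\lambda})^{-1}(-\frac{\partial\phi}{\partial\mathbf{x}_\lambda}\mathbf{f}_\mathbf{x}-\frac{\partial\phi}{\partial t}+\mathbf{f}_\phi)\Big)$ is positive definite. $\mathbf{a}_\mathrm{red}$ are the gauged degrees of freedom of the magnetic vector potential; $\mathbf{M}_\sigma,\mathbf{M}_\nu$ are the conductivity and reluctivity material matrices. *)

theory Defs
  imports "HOL-Analysis.Analysis"
begin

definition pos_def_mat :: "real^'n^'n \<Rightarrow> bool" where
  "pos_def_mat M \<longleftrightarrow> (\<forall>x. x \<noteq> 0 \<longrightarrow> x \<bullet> (M *v x) > 0)"

definition pos_semidef_mat :: "real^'n^'n \<Rightarrow> bool" where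
  "pos_semidef_mat M \<longleftrightarrow> (\<forall>x. x \<bullet> (M *v x) \<ge> 0)"

definition pos_def_map :: "(real^'n \<Rightarrow> real^'n) \<Rightarrow> bool" where
  "pos_def_map L \<longleftrightarrow> (\<forall>w. w \<noteq> 0 \<longrightarrow> w \<bullet> L w > 0)"

text \<open>The expression
  (d phi/d i)^{-1} (- d phi/d x f_x - d phi/d t + f_phi), evaluated at (x,i,v,t),
  where phi is a function of the tuple (i,x,t).\<close>
definition ind_expr ::
  "((real^'l) \<times> (real^'x) \<times> real \<Rightarrow> real^'l) \<Rightarrow>
   (real^'x \<Rightarrow> real^'l \<Rightarrow> real^'l \<Rightarrow> real \<Rightarrow> real^'x) \<Rightarrow>
   (real^'x \<Rightarrow> real^'l \<Rightarrow> real^'l \<Rightarrow> real \<Rightarrow> real^'l) \<Rightarrow>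
   real^'x \<Rightarrow> real^'l \<Rightarrow> real^'l \<Rightarrow> real \<Rightarrow> real^'l" where
  "ind_expr phi fx fphi x i v t =
     (let D = frechet_derivative phi (at (i, x, t))
      in inv (\<lambda>h. D (h, 0, 0))
           (- D (0, fx x i v t, 0) - D (0, 0, 1) + fphi x i v t))"

text \<open>The "algebraic manipulations" from F = 0 and
  dF/dt = 0 are read pointwise on jets: whenever the values
  (x', i', x'', i'', x, i, v, v', t) satisfy F = 0 and the total time derivative
  DF (x'', i'', x', i', v', 1) = 0, the derived relations x' = f_x(x,i,v,t) and
  d/dt phi(i,x,t) = Dphi (i', x', 1) = f_phi(x,i,v,t) hold.\<close>
definition inductance_like ::
  "((real^'x) \<times> (real^'l) \<times> (real^'x) \<times> (real^'l) \<times> (real^'l) \<times> real \<Rightarrow> 'r::real_normed_vector)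
   \<Rightarrow> bool" where
  "inductance_like F \<longleftrightarrow>
     (\<forall>z. F differentiable (at z)) \<and>
     (\<exists>(fx :: real^'x \<Rightarrow> real^'l \<Rightarrow> real^'l \<Rightarrow> real \<Rightarrow> real^'x)
        (fphi :: real^'x \<Rightarrow> real^'l \<Rightarrow> real^'l \<Rightarrow> real \<Rightarrow> real^'l)
        (phi :: (real^'l) \<times> (real^'x) \<times> real \<Rightarrow> real^'l).
        (\<forall>p. phi differentiable (at p)) \<and>
        (\<forall>i x t. bij (\<lambda>h. frechet_derivative phi (at (i, x, t)) (h, 0, 0))) \<and>
        (\<forall>x i v t. (\<lambda>w. ind_expr phi fx fphi x i w t) differentiable (at v) \<and>
            pos_def_map (frechet_derivative (\<lambda>w. ind_expr phi fx fphi x i w t) (at v))) \<and>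
        (\<forall>x' i' x'' i'' x i v v' t.
            F (x', i', x, i, v, t) = 0 \<and>
            frechet_derivative F (at (x', i', x, i, v, t)) (x'', i'', x', i', v', 1) = 0
            \<longrightarrow> x' = fx x i v t \<and>
                frechet_derivative phi (at (i, x, t)) (i', x', 1) = fphi x i v t))"

definition Astar_DAE ::
  "real^'k^'k \<Rightarrow> real^'k^'k \<Rightarrow> real^'s^'k \<Rightarrow>
   (real^'k) \<times> (real^'s) \<times> (real^'k) \<times> (real^'s) \<times> (real^'s) \<times> real \<Rightarrow> (real^'k) \<times> (real^'s)" where
  "Astar_DAE Mbar K Xbar = (\<lambda>(da, di, a, i, v, t).
     (Mbar *v da + K *v a - Xbar *v i, transpose Xbar *v da - v))"

end

theory Submission
  imports Defs
begin

(* Take phi(i,x,t) = i.  Eliminating the second derivative of a_red, the jets (x, i, v, x', i')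
   of the system form a linear space on which (x', i') is a function of (x, i, v): uniqueness
   holds because M + K is positive definite, X is injective and im X is orthogonal to im M.
   A jet exists for every voltage v by the Fredholm alternative, and the resulting linear map
   L : v \<mapsto> i' is positive definite, since v \<bullet> L v = a \<bullet> (M + K) a for the corresponding
   potential rate a. *)

lemma range_memI_orthogonal:
  fixes f :: "'a::euclidean_space \<Rightarrow> 'b::euclidean_space"
  assumes "linear f" and "\<And>q. (\<And>w. q \<bullet> f w = 0) \<Longrightarrow> q \<bullet> t = 0"
  shows "t \<in> range f"
proof -
  obtain r q where r: "r \<in> span (range f)" and q: "\<And>w. w \<in> span (range f) \<Longrightarrow> orthogonal q w"
    and t: "t = r + q"
    using orthogonal_subspace_decomp_exists by blast
  have "q \<bullet> t = 0" using q by (intro assms(2)) (simp add: orthogonal_def span_base)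
  moreover have "q \<bullet> r = 0" using q[OF r] by (simp add: orthogonal_def)
  ultimately have "q = 0" using t by (simp add: inner_add_right)
  moreover have "span (range f) = range f"
    by (simp add: span_eq_iff linear_subspace_image[OF assms(1) subspace_UNIV])
  ultimately show ?thesis using r t by (simp del: span_eq_iff)
qed

lemma inner_matrix_vector_mult_transpose:
  fixes A :: "real^'n^'m"
  shows "x \<bullet> (A *v y) = (transpose A *v x) \<bullet> y"
  by (metis dot_lmul_matrix transpose_transpose vector_transpose_matrix)

lemma inner_matrix_vector_mult_symmetric:
  fixes A :: "real^'n^'n"
  assumes "transpose A = A"
  shows "x \<bullet> (A *v y) = (A *v x) \<bullet> y"
  using inner_matrix_vector_mult_transpose[of x A y] assms by simp

text \<open>With phi(i,x,t) = i the expression in the definition of inductance-like reduces to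
  G(x,i) + L v.\<close>

lemma inductance_like_linearI:
  fixes F :: "(real^'x) \<times> (real^'l) \<times> (real^'x) \<times> (real^'l) \<times> (real^'l) \<times> real \<Rightarrow> 'r::euclidean_space"
    and L :: "real^'l \<Rightarrow> real^'l"
  assumes "linear F" and "linear L" and "pos_def_map L"
    and jet: "\<And>x' i' x'' i'' x i v v' t. F (x', i', x, i, v, t) = 0 \<Longrightarrow>
       F (x'', i'', x', i', v', 1) = 0 \<Longrightarrow> x' = fx x i v t \<and> i' = G x i + L v"
  shows "inductance_like F"
proof -
  have dF: "(F has_derivative F) (at z)" for z
    using assms(1) by (simp add: bounded_linear_imp_has_derivative linear_conv_bounded_linear)
  define phi :: "(real^'l) \<times> (real^'x) \<times> real \<Rightarrow> real^'l" where "phi = fst"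
  have dphi: "(phi has_derivative phi) (at p)" for p
    unfolding phi_def by (rule bounded_linear_imp_has_derivative) (rule bounded_linear_fst)
  note fd = frechet_derivative_at[OF dF, symmetric] frechet_derivative_at[OF dphi, symmetric]
  define fphi where "fphi = (\<lambda>x i v (t::real). G x i + L v)"
  have ind: "ind_expr phi fx fphi x i w t = G x i + L w" for x i w t
    unfolding ind_expr_def fd Let_def by (simp add: phi_def fphi_def inv_identity)
  have dL: "((\<lambda>w. ind_expr phi fx fphi x i w t) has_derivative L) (at v)" for x i v t
    unfolding ind using assms(2)
    by (auto intro!: derivative_eq_intros simp: linear_conv_bounded_linear bounded_linear_imp_has_derivative)
  show ?thesis unfolding inductance_like_def
  proof (intro conjI allI exI[of _ fx] exI[of _ fphi] exI[of _ phi] impI)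
    show "F differentiable at z" "phi differentiable at p" for z p
      using dF dphi differentiable_def by blast+
    show "bij (\<lambda>h. frechet_derivative phi (at (i, x, t)) (h, 0, 0))" for i x t
      unfolding fd by (simp add: phi_def bij_id[unfolded id_def])
    show "(\<lambda>w. ind_expr phi fx fphi x i w t) differentiable at v" for x i v t
      using dL differentiable_def by blast
    show "pos_def_map (frechet_derivative (\<lambda>w. ind_expr phi fx fphi x i w t) (at v))" for x i v t
      unfolding frechet_derivative_at[OF dL, symmetric] by (fact assms(3))
  next
    fix x' i' x'' i'' x i v v' t
    assume "F (x', i', x, i, v, t) = 0 \<and>
      frechet_derivative F (at (x', i', x, i, v, t)) (x'', i'', x', i', v', 1) = 0"
    then have "x' = fx x i v t \<and> i' = G x i + L v" using jet unfolding fd by blast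
    then show "x' = fx x i v t" "frechet_derivative phi (at (i, x, t)) (i', x', 1) = fphi x i v t"
      unfolding fd by (simp_all add: phi_def fphi_def)
  qed
qed

locale gauged_astar =
  fixes M K :: "real^'k^'k" and X :: "real^'s^'k"
  assumes symmetric_M: "transpose M = M" and symmetric_K: "transpose K = K"
    and pos_def_sum: "\<And>y. y \<noteq> 0 \<Longrightarrow> y \<bullet> ((M + K) *v y) > 0"
    and inj_X: "inj ((*v) X)"
    and range_X_orthogonal_M: "\<And>u w. (X *v u) \<bullet> (M *v w) = 0"
begin

lemma eq_0_if_kernel_M_and_K_null:
  assumes "M *v d = 0" and "d \<bullet> (K *v d) = 0"
  shows "d = 0"
  using pos_def_sum[of d] assms by (auto simp: matrix_vector_mult_add_rdistrib inner_add_right)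

lemma eq_0_if_range_X_eq_range_M:
  assumes "X *v u = M *v e"
  shows "u = 0"
proof -
  have "X *v u = 0" using range_X_orthogonal_M[of u e] assms by simp
  then show ?thesis using inj_X by (metis injD matrix_vector_mult_0_right)
qed

text \<open>A jet (x, i, v, x', i') of the A* system: the equations F = 0 and dF/dt = 0 with the
  unknown second derivative x'' eliminated into the existential.\<close>

definition jets :: "((real^'k) \<times> (real^'s) \<times> (real^'s) \<times> (real^'k) \<times> (real^'s)) set" where
  "jets = {(x, i, v, a, j). X *v i = M *v a + K *v x \<and> v = transpose X *v a \<and>
      (\<exists>e. X *v j = M *v e + K *v a)}"

lemma subspace_jets: "subspace jets"
proof (unfold subspace_def, intro conjI ballI allI)
  show "0 \<in> jets" unfolding jets_def by (auto simp: zero_prod_def intro!: exI[of _ 0])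
next
  fix w1 w2 assume "w1 \<in> jets" "w2 \<in> jets"
  then obtain x1 i1 v1 a1 j1 e1 x2 i2 v2 a2 j2 e2 where
    "w1 = (x1, i1, v1, a1, j1)" "X *v i1 = M *v a1 + K *v x1" "v1 = transpose X *v a1"
      "X *v j1 = M *v e1 + K *v a1" and
    "w2 = (x2, i2, v2, a2, j2)" "X *v i2 = M *v a2 + K *v x2" "v2 = transpose X *v a2"
      "X *v j2 = M *v e2 + K *v a2"
    unfolding jets_def by auto
  then show "w1 + w2 \<in> jets" unfolding jets_def
    by (auto simp: matrix_vector_right_distrib algebra_simps intro!: exI[of _ "e1 + e2"])
next
  fix c :: real and w assume "w \<in> jets"
  then obtain x i v a j e where
    "w = (x, i, v, a, j)" "X *v i = M *v a + K *v x" "v = transpose X *v a"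
      "X *v j = M *v e + K *v a"
    unfolding jets_def by auto
  then show "c *\<^sub>R w \<in> jets" unfolding jets_def
    by (auto simp: matrix_vector_mult_scaleR scaleR_vector_matrix_assoc simp flip: scaleR_right_distrib
        intro!: exI[of _ "c *\<^sub>R e"])
qed

lemma jets_null:
  assumes "(0, 0, 0, a, j) \<in> jets"
  shows "a = 0 \<and> j = 0"
proof -
  obtain e where a: "M *v a = 0" "transpose X *v a = 0" and j: "X *v j = M *v e + K *v a"
    using assms unfolding jets_def by auto
  have "a \<bullet> (K *v a) = a \<bullet> (X *v j) - a \<bullet> (M *v e)"
    by (simp add: j inner_add_right)
  also have "\<dots> = (transpose X *v a) \<bullet> j - (transpose M *v a) \<bullet> e"
    by (simp flip: dot_lmul_matrix)
  also have "\<dots> = 0"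
    using a by (simp add: symmetric_M)
  finally have "a = 0" using a eq_0_if_kernel_M_and_K_null by blast
  with j have "X *v j = M *v e" by simp
  with \<open>a = 0\<close> show ?thesis using eq_0_if_range_X_eq_range_M by blast
qed

lemma jets_unique:
  assumes "(x, i, v, a, j) \<in> jets" and "(x, i, v, b, l) \<in> jets"
  shows "a = b \<and> j = l"
  using jets_null[of "a - b" "j - l"] subspace_diff[OF subspace_jets assms] by simp

definition jet_map :: "(real^'k) \<times> (real^'k) \<times> (real^'s) \<Rightarrow> (real^'k) \<times> (real^'k) \<times> (real^'s)" where
  "jet_map = (\<lambda>(y, z, j). (K *v y + M *v z - X *v j, M *v y, transpose X *v y))"

lemma linear_jet_map: "linear jet_map"
  by (rule linearI) (auto simp: jet_map_def algebra_simps scaleR_vector_matrix_assoc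
      vector_matrix_left_distrib split: prod.splits)

lemma last_eq_0_if_orthogonal_range_jet_map:
  assumes "\<And>w. (q1, q2, q3) \<bullet> jet_map w = 0"
  shows "q3 = 0"
proof -
  have orth: "q1 \<bullet> (K *v y + M *v z - X *v j) + q2 \<bullet> (M *v y) + q3 \<bullet> (transpose X *v y) = 0"
    for y z j using assms[of "(y, z, j)"] by (simp add: jet_map_def add.assoc)
  have "(q1 v* X) \<bullet> (q1 v* X) = 0" using orth[of 0 0 "q1 v* X"] by (simp add: dot_lmul_matrix)
  then have X1: "q1 v* X = 0" by simp
  have "(q1 v* M) \<bullet> (q1 v* M) = 0" using orth[of 0 "q1 v* M" 0] by (simp add: dot_lmul_matrix)
  then have M1: "M *v q1 = 0" using symmetric_M by (metis inner_eq_zero_iff vector_transpose_matrix)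
  have "(K *v q1 + M *v q2 + X *v q3) \<bullet> y = 0" for y
  proof -
    have "(X *v q3) \<bullet> y = q3 \<bullet> (transpose X *v y)"
      using inner_matrix_vector_mult_transpose[of q3 "transpose X" y] by simp
    then show ?thesis
      using orth[of y 0 0] by (simp add: inner_add_left
          inner_matrix_vector_mult_symmetric[OF symmetric_K, of q1 y, symmetric]
          inner_matrix_vector_mult_symmetric[OF symmetric_M, of q2 y, symmetric])
  qed
  from this[of "K *v q1 + M *v q2 + X *v q3"]
  have E: "K *v q1 + M *v q2 + X *v q3 = 0" by simp
  then have "K *v q1 = - (M *v q2) - X *v q3"
    by (simp add: algebra_simps eq_neg_iff_add_eq_0)
  then have "q1 \<bullet> (K *v q1) = - (q1 \<bullet> (M *v q2)) - q1 \<bullet> (X *v q3)"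
    by (simp add: inner_diff_right)
  also have "\<dots> = 0"
    using M1 X1 by (simp add: inner_matrix_vector_mult_symmetric[OF symmetric_M]
        inner_matrix_vector_mult_transpose[of q1 X])
  finally have "q1 = 0" using eq_0_if_kernel_M_and_K_null M1 by blast
  with E have "X *v (- q3) = M *v q2"
    by (simp add: linear_neg[OF matrix_vector_mul_linear] add_eq_0_iff2 eq_commute[of "- _"])
  then show "q3 = 0" using eq_0_if_range_X_eq_range_M by force
qed

lemma jets_exist: "\<exists>a j. (0, 0, v, a, j) \<in> jets"
proof -
  have "(0, 0, v) \<in> range jet_map"
  proof (rule range_memI_orthogonal[OF linear_jet_map])
    fix q :: "(real^'k) \<times> (real^'k) \<times> (real^'s)"
    assume orth: "\<And>w. q \<bullet> jet_map w = 0"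
    obtain q1 q2 q3 where q: "q = (q1, q2, q3)" by (cases q) auto
    have "q3 = 0" using orth unfolding q by (rule last_eq_0_if_orthogonal_range_jet_map)
    then show "q \<bullet> (0, 0, v) = 0" by (simp add: q)
  qed
  then obtain y z j where "jet_map (y, z, j) = (0, 0, v)" by auto
  then have "(0, 0, v, y, j) \<in> jets"
    unfolding jet_map_def jets_def by (auto simp: algebra_simps intro!: exI[of _ z])
  then show ?thesis by blast
qed

definition potential_rate :: "real^'k \<Rightarrow> real^'s \<Rightarrow> real^'s \<Rightarrow> real^'k" where
  "potential_rate x i v = (THE a. \<exists>j. (x, i, v, a, j) \<in> jets)"

definition current_rate :: "real^'k \<Rightarrow> real^'s \<Rightarrow> real^'s \<Rightarrow> real^'s" where
  "current_rate x i v = (THE j. \<exists>a. (x, i, v, a, j) \<in> jets)"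

definition inverse_inductance :: "real^'s \<Rightarrow> real^'s" where
  "inverse_inductance = current_rate 0 0"

lemma rates_eq:
  assumes "(x, i, v, a, j) \<in> jets"
  shows "potential_rate x i v = a \<and> current_rate x i v = j"
  unfolding potential_rate_def current_rate_def
  using assms jets_unique by (intro conjI the1_equality) blast+

lemma inverse_inductance_jet: "(0, 0, v, potential_rate 0 0 v, inverse_inductance v) \<in> jets"
  using jets_exist[of v] rates_eq inverse_inductance_def by metis

lemma current_rate_split:
  assumes "(x, i, v, a, j) \<in> jets"
  shows "j = current_rate x i 0 + inverse_inductance v"
  using rates_eq subspace_diff[OF subspace_jets assms inverse_inductance_jet[of v]] by force

lemma linear_inverse_inductance: "linear inverse_inductance"
proof (rule linearI)
  note jet = inverse_inductance_jet and sub = subspace_jets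
  show "inverse_inductance (v + w) = inverse_inductance v + inverse_inductance w" for v w
    using rates_eq subspace_add[OF sub jet[of v] jet[of w]] by (simp add: inverse_inductance_def)
  show "inverse_inductance (c *\<^sub>R v) = c *\<^sub>R inverse_inductance v" for c v
    using rates_eq subspace_scale[OF sub jet[of v], of c] by (simp add: inverse_inductance_def)
qed

lemma pos_def_inverse_inductance: "pos_def_map inverse_inductance"
  unfolding pos_def_map_def
proof (intro allI impI)
  fix v :: "real^'s" assume "v \<noteq> 0"
  obtain a e where a: "M *v a = 0" "v = transpose X *v a"
    and j: "X *v inverse_inductance v = M *v e + K *v a"
    using inverse_inductance_jet[of v] unfolding jets_def by auto
  have "a \<noteq> 0" using a \<open>v \<noteq> 0\<close> by auto
  have "v \<bullet> inverse_inductance v = a \<bullet> (X *v inverse_inductance v)"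
    using inner_matrix_vector_mult_transpose[of a X] a(2) by simp
  also have "\<dots> = a \<bullet> (M *v e) + a \<bullet> (K *v a)"
    by (simp add: j inner_add_right)
  also have "\<dots> = a \<bullet> ((M + K) *v a)"
    using a(1) by (simp add: inner_matrix_vector_mult_symmetric[OF symmetric_M]
        matrix_vector_mult_add_rdistrib inner_add_right)
  finally show "v \<bullet> inverse_inductance v > 0" using pos_def_sum[OF \<open>a \<noteq> 0\<close>] by simp
qed

lemma inductance_like_Astar_DAE: "inductance_like (Astar_DAE M K X)"
proof (rule inductance_like_linearI)
  show "linear (Astar_DAE M K X)"
    by (rule linearI) (auto simp: Astar_DAE_def algebra_simps scaleR_vector_matrix_assoc
        vector_matrix_left_distrib split: prod.splits)
  fix x' i' x'' i'' x i v v' and t :: real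
  assume "Astar_DAE M K X (x', i', x, i, v, t) = 0" "Astar_DAE M K X (x'', i'', x', i', v', 1) = 0"
  then have "(x, i, v, x', i') \<in> jets"
    unfolding Astar_DAE_def jets_def by (auto simp: zero_prod_def algebra_simps intro!: exI[of _ x''])
  then show "x' = potential_rate x i v \<and> i' = current_rate x i 0 + inverse_inductance v"
    using rates_eq current_rate_split by blast
qed (fact linear_inverse_inductance pos_def_inverse_inductance)+

end

text \<open>Only the case lam = 1 of the pencil hypothesis is needed.\<close>

theorem proposition7:
  fixes Msig Mnu C :: "real^'n^'n"
    and P :: "real^'k^'n"
    and Xs :: "real^'s^'n"
  defines "Mbar \<equiv> transpose P ** Msig ** P"
    and "K \<equiv> transpose P ** transpose C ** Mnu ** C ** P"
    and "Xbar \<equiv> transpose P ** Xs"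
  assumes "transpose Msig = Msig" and "pos_semidef_mat Msig"
    and "transpose Mnu = Mnu" and "pos_def_mat Mnu"
    and "\<forall>lam::real. lam > 0 \<longrightarrow> pos_def_mat (lam *\<^sub>R Mbar + K)"
    and "rank Xbar = CARD('s)"
    and "\<forall>u w. (Xbar *v u) \<bullet> (Mbar *v w) = 0"
  shows "inductance_like (Astar_DAE Mbar K Xbar)"
proof (rule gauged_astar.inductance_like_Astar_DAE, unfold_locales)
  show "transpose Mbar = Mbar" "transpose K = K"
    unfolding Mbar_def K_def by (simp_all add: matrix_transpose_mul assms(4,6) matrix_mul_assoc)
  show "y \<bullet> ((Mbar + K) *v y) > 0" if "y \<noteq> 0" for y
    using assms(8) that unfolding pos_def_mat_def by (metis scaleR_one zero_less_one)
  show "inj ((*v) Xbar)" using assms(9) full_rank_injective by blast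
  show "(Xbar *v u) \<bullet> (Mbar *v w) = 0" for u w using assms(10) by blast
qed

end
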